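(* Let $\mathcal T$ and $\mathcal S$ be triangulated categories and let $T:\mathcal S\to\mathcal T$ be a triangle functor. Suppose $T$ has a left (respectively right) adjoint $S$, and let $\eta:ST\to\mathrm{id}$ be the counit (respectively $\tilde\epsilon:\mathrm{id}\to ST$ the unit) of the adjunction. Then an object $Q$ of $\mathcal S$ is $T$-relative projective (respectively injective) if and only if $\eta_Q$ is a split epimorphism (respectively $\tilde\epsilon_Q$ is a split monomorphism).
   Context: An object $Q$ of $\mathcal S$ is $T$-relative projective if the natural transformation $\mathcal S(Q,-)\to\mathcal T(TQ,T-)$ induced by $T$ is injective, and $T$-relative injective if the natural transformation $\mathcal S(-,Q)\to\mathcal T(T-,TQ)$ induced by $T$ is injective. *)

theory Defs
  imports Main
begin

text \<open>Hom-sets are pairwise disjoint;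
  cmp g f denotes the composite g after f.\<close>

record ('o,'m) tricat =
  Ob :: "'o set"
  Hom :: "'o \<Rightarrow> 'o \<Rightarrow> 'm set"
  cmp :: "'m \<Rightarrow> 'm \<Rightarrow> 'm"
  idm :: "'o \<Rightarrow> 'm"
  madd :: "'m \<Rightarrow> 'm \<Rightarrow> 'm"
  mzero :: "'o \<Rightarrow> 'o \<Rightarrow> 'm"
  mneg :: "'m \<Rightarrow> 'm"
  shO :: "'o \<Rightarrow> 'o"
  shM :: "'m \<Rightarrow> 'm"
  distT :: "('o \<times> 'o \<times> 'o \<times> 'm \<times> 'm \<times> 'm) set"

definition category :: "('o,'m) tricat \<Rightarrow> bool" where
  "category C \<longleftrightarrow>
     (\<forall>X Y. (X \<notin> Ob C \<or> Y \<notin> Ob C) \<longrightarrow> Hom C X Y = {})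
   \<and> (\<forall>X X' Y Y' f. f \<in> Hom C X Y \<and> f \<in> Hom C X' Y' \<longrightarrow> X = X' \<and> Y = Y')
   \<and> (\<forall>X\<in>Ob C. idm C X \<in> Hom C X X)
   \<and> (\<forall>X Y Z f g. f \<in> Hom C X Y \<longrightarrow> g \<in> Hom C Y Z \<longrightarrow> cmp C g f \<in> Hom C X Z)
   \<and> (\<forall>X Y f. f \<in> Hom C X Y \<longrightarrow> cmp C (idm C Y) f = f \<and> cmp C f (idm C X) = f)
   \<and> (\<forall>W X Y Z f g h. f \<in> Hom C W X \<longrightarrow> g \<in> Hom C X Y \<longrightarrow> h \<in> Hom C Y Z \<longrightarrow>
        cmp C h (cmp C g f) = cmp C (cmp C h g) f)"

definition preadditive :: "('o,'m) tricat \<Rightarrow> bool" where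
  "preadditive C \<longleftrightarrow> category C
   \<and> (\<forall>X\<in>Ob C. \<forall>Y\<in>Ob C. mzero C X Y \<in> Hom C X Y)
   \<and> (\<forall>X Y f g. f \<in> Hom C X Y \<longrightarrow> g \<in> Hom C X Y \<longrightarrow> madd C f g \<in> Hom C X Y)
   \<and> (\<forall>X Y f. f \<in> Hom C X Y \<longrightarrow> mneg C f \<in> Hom C X Y)
   \<and> (\<forall>X Y f g h. f \<in> Hom C X Y \<longrightarrow> g \<in> Hom C X Y \<longrightarrow> h \<in> Hom C X Y \<longrightarrow>
        madd C (madd C f g) h = madd C f (madd C g h)
      \<and> madd C f g = madd C g f
      \<and> madd C f (mzero C X Y) = f
      \<and> madd C f (mneg C f) = mzero C X Y)
   \<and> (\<forall>X Y Z f f' g. f \<in> Hom C X Y \<longrightarrow> f' \<in> Hom C X Y \<longrightarrow> g \<in> Hom C Y Z \<longrightarrow>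
        cmp C g (madd C f f') = madd C (cmp C g f) (cmp C g f'))
   \<and> (\<forall>X Y Z f g g'. f \<in> Hom C X Y \<longrightarrow> g \<in> Hom C Y Z \<longrightarrow> g' \<in> Hom C Y Z \<longrightarrow>
        cmp C (madd C g g') f = madd C (cmp C g f) (cmp C g' f))"

definition is_zero_obj :: "('o,'m) tricat \<Rightarrow> 'o \<Rightarrow> bool" where
  "is_zero_obj C Z \<longleftrightarrow> Z \<in> Ob C \<and> idm C Z = mzero C Z Z"

definition additive :: "('o,'m) tricat \<Rightarrow> bool" where
  "additive C \<longleftrightarrow> preadditive C
   \<and> (\<exists>Z. is_zero_obj C Z)
   \<and> (\<forall>X\<in>Ob C. \<forall>Y\<in>Ob C. \<exists>P i1 i2 p1 p2. P \<in> Ob C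
        \<and> i1 \<in> Hom C X P \<and> i2 \<in> Hom C Y P \<and> p1 \<in> Hom C P X \<and> p2 \<in> Hom C P Y
        \<and> cmp C p1 i1 = idm C X \<and> cmp C p2 i2 = idm C Y
        \<and> cmp C p2 i1 = mzero C X Y \<and> cmp C p1 i2 = mzero C Y X
        \<and> madd C (cmp C i1 p1) (cmp C i2 p2) = idm C P)"

definition is_functor :: "('o,'m) tricat \<Rightarrow> ('p,'n) tricat \<Rightarrow> ('o \<Rightarrow> 'p) \<Rightarrow> ('m \<Rightarrow> 'n) \<Rightarrow> bool" where
  "is_functor C D Fo Fm \<longleftrightarrow>
     (\<forall>X\<in>Ob C. Fo X \<in> Ob D)
   \<and> (\<forall>X Y f. f \<in> Hom C X Y \<longrightarrow> Fm f \<in> Hom D (Fo X) (Fo Y))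
   \<and> (\<forall>X\<in>Ob C. Fm (idm C X) = idm D (Fo X))
   \<and> (\<forall>X Y Z f g. f \<in> Hom C X Y \<longrightarrow> g \<in> Hom C Y Z \<longrightarrow> Fm (cmp C g f) = cmp D (Fm g) (Fm f))"

definition additive_functor :: "('o,'m) tricat \<Rightarrow> ('p,'n) tricat \<Rightarrow> ('o \<Rightarrow> 'p) \<Rightarrow> ('m \<Rightarrow> 'n) \<Rightarrow> bool" where
  "additive_functor C D Fo Fm \<longleftrightarrow> is_functor C D Fo Fm
   \<and> (\<forall>X Y f g. f \<in> Hom C X Y \<longrightarrow> g \<in> Hom C X Y \<longrightarrow> Fm (madd C f g) = madd D (Fm f) (Fm g))"

definition isomorphism :: "('o,'m) tricat \<Rightarrow> 'o \<Rightarrow> 'o \<Rightarrow> 'm \<Rightarrow> bool" where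
  "isomorphism C X Y f \<longleftrightarrow> f \<in> Hom C X Y \<and> (\<exists>g\<in>Hom C Y X. cmp C g f = idm C X \<and> cmp C f g = idm C Y)"

definition split_epi :: "('o,'m) tricat \<Rightarrow> 'o \<Rightarrow> 'o \<Rightarrow> 'm \<Rightarrow> bool" where
  "split_epi C X Y f \<longleftrightarrow> f \<in> Hom C X Y \<and> (\<exists>s\<in>Hom C Y X. cmp C f s = idm C Y)"

definition split_mono :: "('o,'m) tricat \<Rightarrow> 'o \<Rightarrow> 'o \<Rightarrow> 'm \<Rightarrow> bool" where
  "split_mono C X Y f \<longleftrightarrow> f \<in> Hom C X Y \<and> (\<exists>r\<in>Hom C Y X. cmp C r f = idm C X)"

definition nat_trans :: "('o,'m) tricat \<Rightarrow> ('p,'n) tricat \<Rightarrow> ('o \<Rightarrow> 'p) \<Rightarrow> ('m \<Rightarrow> 'n)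
    \<Rightarrow> ('o \<Rightarrow> 'p) \<Rightarrow> ('m \<Rightarrow> 'n) \<Rightarrow> ('o \<Rightarrow> 'n) \<Rightarrow> bool" where
  "nat_trans C D Fo Fm Go Gm \<tau> \<longleftrightarrow>
     (\<forall>X\<in>Ob C. \<tau> X \<in> Hom D (Fo X) (Go X))
   \<and> (\<forall>X Y f. f \<in> Hom C X Y \<longrightarrow> cmp D (\<tau> Y) (Fm f) = cmp D (Gm f) (\<tau> X))"

definition nat_iso :: "('o,'m) tricat \<Rightarrow> ('p,'n) tricat \<Rightarrow> ('o \<Rightarrow> 'p) \<Rightarrow> ('m \<Rightarrow> 'n)
    \<Rightarrow> ('o \<Rightarrow> 'p) \<Rightarrow> ('m \<Rightarrow> 'n) \<Rightarrow> ('o \<Rightarrow> 'n) \<Rightarrow> bool" where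
  "nat_iso C D Fo Fm Go Gm \<tau> \<longleftrightarrow> nat_trans C D Fo Fm Go Gm \<tau>
   \<and> (\<forall>X\<in>Ob C. isomorphism D (Fo X) (Go X) (\<tau> X))"

definition shift_autoequiv :: "('o,'m) tricat \<Rightarrow> bool" where
  "shift_autoequiv C \<longleftrightarrow> additive_functor C C (shO C) (shM C)
   \<and> (\<forall>X\<in>Ob C. \<forall>Y\<in>Ob C. bij_betw (shM C) (Hom C X Y) (Hom C (shO C X) (shO C Y)))
   \<and> (\<forall>Y\<in>Ob C. \<exists>X\<in>Ob C. \<exists>f. isomorphism C (shO C X) Y f)"

definition is_triangle :: "('o,'m) tricat \<Rightarrow> 'o \<times> 'o \<times> 'o \<times> 'm \<times> 'm \<times> 'm \<Rightarrow> bool" where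
  "is_triangle C t = (case t of (X,Y,Z,u,v,w) \<Rightarrow>
     u \<in> Hom C X Y \<and> v \<in> Hom C Y Z \<and> w \<in> Hom C Z (shO C X))"

definition tri_morph :: "('o,'m) tricat \<Rightarrow> 'o \<times> 'o \<times> 'o \<times> 'm \<times> 'm \<times> 'm
    \<Rightarrow> 'o \<times> 'o \<times> 'o \<times> 'm \<times> 'm \<times> 'm \<Rightarrow> 'm \<Rightarrow> 'm \<Rightarrow> 'm \<Rightarrow> bool" where
  "tri_morph C t t' a b c = (case t of (X,Y,Z,u,v,w) \<Rightarrow> case t' of (X',Y',Z',u',v',w') \<Rightarrow>
     a \<in> Hom C X X' \<and> b \<in> Hom C Y Y' \<and> c \<in> Hom C Z Z'
   \<and> cmp C b u = cmp C u' a \<and> cmp C c v = cmp C v' b \<and> cmp C (shM C a) w = cmp C w' c)"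

definition tri_iso :: "('o,'m) tricat \<Rightarrow> 'o \<times> 'o \<times> 'o \<times> 'm \<times> 'm \<times> 'm
    \<Rightarrow> 'o \<times> 'o \<times> 'o \<times> 'm \<times> 'm \<times> 'm \<Rightarrow> 'm \<Rightarrow> 'm \<Rightarrow> 'm \<Rightarrow> bool" where
  "tri_iso C t t' a b c = (tri_morph C t t' a b c \<and>
     (case t of (X,Y,Z,u,v,w) \<Rightarrow> case t' of (X',Y',Z',u',v',w') \<Rightarrow>
       isomorphism C X X' a \<and> isomorphism C Y Y' b \<and> isomorphism C Z Z' c))"

text \<open>Triangulated category: axioms TR1--TR4 (octahedral axiom in the form of the Stacks project).\<close>
definition triangulated :: "('o,'m) tricat \<Rightarrow> bool" where
  "triangulated C \<longleftrightarrow> additive C \<and> shift_autoequiv C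
   \<and> distT C \<subseteq> {t. is_triangle C t}
   \<and> (\<forall>X\<in>Ob C. \<forall>Z. is_zero_obj C Z \<longrightarrow>
        (X, X, Z, idm C X, mzero C X Z, mzero C Z (shO C X)) \<in> distT C)
   \<and> (\<forall>t t' a b c. t \<in> distT C \<longrightarrow> is_triangle C t' \<longrightarrow> tri_iso C t t' a b c \<longrightarrow> t' \<in> distT C)
   \<and> (\<forall>X Y u. u \<in> Hom C X Y \<longrightarrow> (\<exists>Z v w. (X,Y,Z,u,v,w) \<in> distT C))
   \<and> (\<forall>X Y Z u v w. is_triangle C (X,Y,Z,u,v,w) \<longrightarrow>
        ((X,Y,Z,u,v,w) \<in> distT C \<longleftrightarrow> (Y, Z, shO C X, v, w, mneg C (shM C u)) \<in> distT C))
   \<and> (\<forall>X Y Z u v w X' Y' Z' u' v' w' a b.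
        (X,Y,Z,u,v,w) \<in> distT C \<longrightarrow> (X',Y',Z',u',v',w') \<in> distT C \<longrightarrow>
        a \<in> Hom C X X' \<longrightarrow> b \<in> Hom C Y Y' \<longrightarrow> cmp C b u = cmp C u' a \<longrightarrow>
        (\<exists>c. tri_morph C (X,Y,Z,u,v,w) (X',Y',Z',u',v',w') a b c))
   \<and> (\<forall>X Y Z f g Q1 p1 d1 Q2 p2 d2 Q3 p3 d3.
        (X,Y,Q1,f,p1,d1) \<in> distT C \<longrightarrow> (X,Z,Q2,cmp C g f,p2,d2) \<in> distT C \<longrightarrow>
        (Y,Z,Q3,g,p3,d3) \<in> distT C \<longrightarrow>
        (\<exists>a b. (Q1,Q2,Q3,a,b,cmp C (shM C p1) d3) \<in> distT C
           \<and> tri_morph C (X,Y,Q1,f,p1,d1) (X,Z,Q2,cmp C g f,p2,d2) (idm C X) g a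
           \<and> tri_morph C (X,Z,Q2,cmp C g f,p2,d2) (Y,Z,Q3,g,p3,d3) f (idm C Z) b))"

definition triangle_functor :: "('o,'m) tricat \<Rightarrow> ('p,'n) tricat \<Rightarrow> ('o \<Rightarrow> 'p) \<Rightarrow> ('m \<Rightarrow> 'n)
    \<Rightarrow> ('o \<Rightarrow> 'n) \<Rightarrow> bool" where
  "triangle_functor C D Fo Fm \<phi> \<longleftrightarrow> additive_functor C D Fo Fm
   \<and> nat_iso C D (Fo \<circ> shO C) (Fm \<circ> shM C) (shO D \<circ> Fo) (shM D \<circ> Fm) \<phi>
   \<and> (\<forall>X Y Z u v w. (X,Y,Z,u,v,w) \<in> distT C \<longrightarrow>
        (Fo X, Fo Y, Fo Z, Fm u, Fm v, cmp D (\<phi> X) (Fm w)) \<in> distT D)"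

definition adjunction :: "('o,'m) tricat \<Rightarrow> ('p,'n) tricat \<Rightarrow> ('o \<Rightarrow> 'p) \<Rightarrow> ('m \<Rightarrow> 'n)
    \<Rightarrow> ('p \<Rightarrow> 'o) \<Rightarrow> ('n \<Rightarrow> 'm) \<Rightarrow> ('o \<Rightarrow> 'm) \<Rightarrow> ('p \<Rightarrow> 'n) \<Rightarrow> bool" where
  "adjunction C D Fo Fm Go Gm unit counit \<longleftrightarrow> is_functor C D Fo Fm \<and> is_functor D C Go Gm
   \<and> nat_trans C C id id (Go \<circ> Fo) (Gm \<circ> Fm) unit
   \<and> nat_trans D D (Fo \<circ> Go) (Fm \<circ> Gm) id id counit
   \<and> (\<forall>X\<in>Ob C. cmp D (counit (Fo X)) (Fm (unit X)) = idm D (Fo X))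
   \<and> (\<forall>Y\<in>Ob D. cmp C (Gm (counit Y)) (unit (Go Y)) = idm C (Go Y))"

definition rel_projective :: "('o,'m) tricat \<Rightarrow> ('m \<Rightarrow> 'n) \<Rightarrow> 'o \<Rightarrow> bool" where
  "rel_projective S Tm Q \<longleftrightarrow> (\<forall>X\<in>Ob S. inj_on Tm (Hom S Q X))"

definition rel_injective :: "('o,'m) tricat \<Rightarrow> ('m \<Rightarrow> 'n) \<Rightarrow> 'o \<Rightarrow> bool" where
  "rel_injective S Tm Q \<longleftrightarrow> (\<forall>X\<in>Ob S. inj_on Tm (Hom S X Q))"

end

theory Submission
  imports Defs
begin

(* Relative projectivity of Q says that T is injective on the morphisms out of Q. By the
   triangle identities this holds exactly when the counit at Q is an epimorphism, and in a
   triangulated category every epimorphism splits: completing it to a distinguished triangle,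
   the next morphism composes to zero with it and is therefore zero, and a distinguished
   triangle with vanishing second morphism has a split epimorphism as its first one.
   Dually, relative injectivity means that the unit at Q is a monomorphism; rotating the
   triangle and using that the shift is an equivalence shows that its third morphism
   vanishes, so the first one is a split monomorphism. *)

definition epimorphism :: "('o,'m) tricat \<Rightarrow> 'o \<Rightarrow> 'o \<Rightarrow> 'm \<Rightarrow> bool" where
  "epimorphism C X Y f \<longleftrightarrow> f \<in> Hom C X Y
     \<and> (\<forall>Z\<in>Ob C. \<forall>g\<in>Hom C Y Z. \<forall>h\<in>Hom C Y Z. cmp C g f = cmp C h f \<longrightarrow> g = h)"

definition monomorphism :: "('o,'m) tricat \<Rightarrow> 'o \<Rightarrow> 'o \<Rightarrow> 'm \<Rightarrow> bool" where
  "monomorphism C X Y f \<longleftrightarrow> f \<in> Hom C X Y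
     \<and> (\<forall>V\<in>Ob C. \<forall>g\<in>Hom C V X. \<forall>h\<in>Hom C V X. cmp C f g = cmp C f h \<longrightarrow> g = h)"

section \<open>Categories\<close>

lemma hom_dom_ob: "category C \<Longrightarrow> f \<in> Hom C X Y \<Longrightarrow> X \<in> Ob C"
  and hom_cod_ob: "category C \<Longrightarrow> f \<in> Hom C X Y \<Longrightarrow> Y \<in> Ob C"
  unfolding category_def by auto

lemma id_hom: "category C \<Longrightarrow> X \<in> Ob C \<Longrightarrow> idm C X \<in> Hom C X X"
  and cmp_hom: "category C \<Longrightarrow> f \<in> Hom C X Y \<Longrightarrow> g \<in> Hom C Y Z \<Longrightarrow> cmp C g f \<in> Hom C X Z"
  and cmp_id_left: "category C \<Longrightarrow> f \<in> Hom C X Y \<Longrightarrow> cmp C (idm C Y) f = f"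
  and cmp_id_right: "category C \<Longrightarrow> f \<in> Hom C X Y \<Longrightarrow> cmp C f (idm C X) = f"
  and cmp_assoc: "category C \<Longrightarrow> f \<in> Hom C W X \<Longrightarrow> g \<in> Hom C X Y \<Longrightarrow> h \<in> Hom C Y Z \<Longrightarrow>
        cmp C h (cmp C g f) = cmp C (cmp C h g) f"
  unfolding category_def by auto

lemma split_epi_imp_epimorphism:
  assumes C: "category C" and u: "split_epi C X Y u"
  shows "epimorphism C X Y u"
proof -
  obtain s where s: "s \<in> Hom C Y X" "cmp C u s = idm C Y" and u: "u \<in> Hom C X Y"
    using u unfolding split_epi_def by blast
  have "g = h" if g: "g \<in> Hom C Y Z" and h: "h \<in> Hom C Y Z" and e: "cmp C g u = cmp C h u"
    for Z g h
  proof -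
    have "g = cmp C (cmp C g u) s"
      using cmp_assoc[OF C s(1) u g] s(2) cmp_id_right[OF C g] by simp
    also have "\<dots> = h"
      using cmp_assoc[OF C s(1) u h] s(2) cmp_id_right[OF C h] e by simp
    finally show ?thesis .
  qed
  with u show ?thesis unfolding epimorphism_def by blast
qed

lemma split_mono_imp_monomorphism:
  assumes C: "category C" and u: "split_mono C X Y u"
  shows "monomorphism C X Y u"
proof -
  obtain r where r: "r \<in> Hom C Y X" "cmp C r u = idm C X" and u: "u \<in> Hom C X Y"
    using u unfolding split_mono_def by blast
  have "g = h" if g: "g \<in> Hom C V X" and h: "h \<in> Hom C V X" and e: "cmp C u g = cmp C u h"
    for V g h
  proof -
    have "g = cmp C r (cmp C u g)"
      using cmp_assoc[OF C g u r(1)] r(2) cmp_id_left[OF C g] by simp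
    also have "\<dots> = h"
      using cmp_assoc[OF C h u r(1)] r(2) cmp_id_left[OF C h] e by simp
    finally show ?thesis .
  qed
  with u show ?thesis unfolding monomorphism_def by blast
qed

section \<open>Preadditive categories\<close>

lemma preadditive_category: "preadditive C \<Longrightarrow> category C"
  and zero_hom: "preadditive C \<Longrightarrow> X \<in> Ob C \<Longrightarrow> Y \<in> Ob C \<Longrightarrow> mzero C X Y \<in> Hom C X Y"
  and neg_hom: "preadditive C \<Longrightarrow> f \<in> Hom C X Y \<Longrightarrow> mneg C f \<in> Hom C X Y"
  and add_zero_right: "preadditive C \<Longrightarrow> f \<in> Hom C X Y \<Longrightarrow> madd C f (mzero C X Y) = f"
  and add_neg_right: "preadditive C \<Longrightarrow> f \<in> Hom C X Y \<Longrightarrow> madd C f (mneg C f) = mzero C X Y"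
  and add_commute: "preadditive C \<Longrightarrow> f \<in> Hom C X Y \<Longrightarrow> g \<in> Hom C X Y \<Longrightarrow>
        madd C f g = madd C g f"
  and add_assoc: "preadditive C \<Longrightarrow> f \<in> Hom C X Y \<Longrightarrow> g \<in> Hom C X Y \<Longrightarrow> h \<in> Hom C X Y \<Longrightarrow>
        madd C (madd C f g) h = madd C f (madd C g h)"
  and cmp_add_left: "preadditive C \<Longrightarrow> f \<in> Hom C X Y \<Longrightarrow> f' \<in> Hom C X Y \<Longrightarrow> g \<in> Hom C Y Z \<Longrightarrow>
        cmp C g (madd C f f') = madd C (cmp C g f) (cmp C g f')"
  and cmp_add_right: "preadditive C \<Longrightarrow> f \<in> Hom C X Y \<Longrightarrow> g \<in> Hom C Y Z \<Longrightarrow> g' \<in> Hom C Y Z \<Longrightarrow>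
        cmp C (madd C g g') f = madd C (cmp C g f) (cmp C g' f)"
  unfolding preadditive_def by auto

lemma neg_unique:
  assumes C: "preadditive C" and f: "f \<in> Hom C X Y" and g: "g \<in> Hom C X Y"
    and sum: "madd C f g = mzero C X Y"
  shows "g = mneg C f"
proof -
  have n: "mneg C f \<in> Hom C X Y" using neg_hom[OF C f] .
  have "g = madd C g (madd C f (mneg C f))"
    using add_neg_right[OF C f] add_zero_right[OF C g] by simp
  also have "\<dots> = madd C (madd C f g) (mneg C f)"
    using add_assoc[OF C g f n] add_commute[OF C f g] by simp
  also have "\<dots> = mneg C f"
    using sum add_commute[OF C _ n] add_zero_right[OF C n] zero_hom[OF C] f
      hom_dom_ob[OF preadditive_category[OF C]] hom_cod_ob[OF preadditive_category[OF C]]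
    by metis
  finally show ?thesis .
qed

lemma neg_neg: "preadditive C \<Longrightarrow> f \<in> Hom C X Y \<Longrightarrow> mneg C (mneg C f) = f"
  by (metis add_commute add_neg_right neg_hom neg_unique)

lemma neg_inject:
  "preadditive C \<Longrightarrow> f \<in> Hom C X Y \<Longrightarrow> g \<in> Hom C X Y \<Longrightarrow> mneg C f = mneg C g \<Longrightarrow> f = g"
  by (metis neg_neg)

lemma idempotent_add_eq_zero:
  assumes C: "preadditive C" and f: "f \<in> Hom C X Y" and "madd C f f = f"
  shows "f = mzero C X Y"
  using add_assoc[OF C f f neg_hom[OF C f]] add_neg_right[OF C f] add_zero_right[OF C f] assms(3)
  by simp

lemma neg_zero:
  assumes C: "preadditive C" and "X \<in> Ob C" "Y \<in> Ob C"
  shows "mneg C (mzero C X Y) = mzero C X Y"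
  using neg_unique[OF C zero_hom[OF C assms(2,3)] zero_hom[OF C assms(2,3)]]
    add_zero_right[OF C zero_hom[OF C assms(2,3)]] by simp

lemma zero_cmp:
  assumes C: "preadditive C" and f: "f \<in> Hom C X Y" and Z: "Z \<in> Ob C"
  shows "cmp C (mzero C Y Z) f = mzero C X Z"
proof -
  have Y: "Y \<in> Ob C" using hom_cod_ob[OF preadditive_category[OF C] f] .
  have z: "mzero C Y Z \<in> Hom C Y Z" using zero_hom[OF C Y Z] .
  show ?thesis
    using idempotent_add_eq_zero[OF C cmp_hom[OF preadditive_category[OF C] f z]]
      cmp_add_right[OF C f z z] add_zero_right[OF C z] by simp
qed

lemma cmp_zero:
  assumes C: "preadditive C" and g: "g \<in> Hom C Y Z" and W: "W \<in> Ob C"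
  shows "cmp C g (mzero C W Y) = mzero C W Z"
proof -
  have Y: "Y \<in> Ob C" using hom_dom_ob[OF preadditive_category[OF C] g] .
  have z: "mzero C W Y \<in> Hom C W Y" using zero_hom[OF C W Y] .
  show ?thesis
    using idempotent_add_eq_zero[OF C cmp_hom[OF preadditive_category[OF C] z g]]
      cmp_add_left[OF C z z g] add_zero_right[OF C z] by simp
qed

lemma neg_cmp:
  assumes C: "preadditive C" and f: "f \<in> Hom C X Y" and g: "g \<in> Hom C Y Z"
  shows "cmp C (mneg C g) f = mneg C (cmp C g f)"
proof -
  have cat: "category C" using preadditive_category[OF C] .
  have "madd C (cmp C g f) (cmp C (mneg C g) f) = mzero C X Z"
    using cmp_add_right[OF C f g neg_hom[OF C g]] add_neg_right[OF C g]
      zero_cmp[OF C f hom_cod_ob[OF cat g]] by simp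
  then show ?thesis
    using neg_unique[OF C cmp_hom[OF cat f g] cmp_hom[OF cat f neg_hom[OF C g]]] by simp
qed

lemma cmp_neg:
  assumes C: "preadditive C" and f: "f \<in> Hom C X Y" and g: "g \<in> Hom C Y Z"
  shows "cmp C g (mneg C f) = mneg C (cmp C g f)"
proof -
  have cat: "category C" using preadditive_category[OF C] .
  have "madd C (cmp C g f) (cmp C g (mneg C f)) = mzero C X Z"
    using cmp_add_left[OF C f neg_hom[OF C f] g] add_neg_right[OF C f]
      cmp_zero[OF C g hom_dom_ob[OF cat f]] by simp
  then show ?thesis
    using neg_unique[OF C cmp_hom[OF cat f g] cmp_hom[OF cat neg_hom[OF C f] g]] by simp
qed

section \<open>Triangulated categories\<close>

lemma triangulated_preadditive: "triangulated C \<Longrightarrow> preadditive C"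
  unfolding triangulated_def additive_def by simp

lemma triangulated_category: "triangulated C \<Longrightarrow> category C"
  using preadditive_category triangulated_preadditive by blast

lemma triangulated_shift_autoequiv: "triangulated C \<Longrightarrow> shift_autoequiv C"
  unfolding triangulated_def by simp

lemma shift_ob: "triangulated C \<Longrightarrow> X \<in> Ob C \<Longrightarrow> shO C X \<in> Ob C"
  and shift_hom: "triangulated C \<Longrightarrow> f \<in> Hom C X Y \<Longrightarrow> shM C f \<in> Hom C (shO C X) (shO C Y)"
  and shift_id: "triangulated C \<Longrightarrow> X \<in> Ob C \<Longrightarrow> shM C (idm C X) = idm C (shO C X)"
  and shift_cmp: "triangulated C \<Longrightarrow> f \<in> Hom C X Y \<Longrightarrow> g \<in> Hom C Y Z \<Longrightarrow>
        shM C (cmp C g f) = cmp C (shM C g) (shM C f)"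
  using triangulated_shift_autoequiv
  unfolding shift_autoequiv_def additive_functor_def is_functor_def by blast+

lemma shift_bij_betw:
  assumes "triangulated C" "X \<in> Ob C" "Y \<in> Ob C"
  shows "bij_betw (shM C) (Hom C X Y) (Hom C (shO C X) (shO C Y))"
  using triangulated_shift_autoequiv[OF assms(1)] assms(2,3) unfolding shift_autoequiv_def by blast

lemma shift_essentially_surjective:
  assumes "triangulated C" "Y \<in> Ob C"
  shows "\<exists>X\<in>Ob C. \<exists>f. isomorphism C (shO C X) Y f"
  using triangulated_shift_autoequiv[OF assms(1)] assms(2) unfolding shift_autoequiv_def by blast

lemma shift_full:
  assumes "triangulated C" "X \<in> Ob C" "Y \<in> Ob C" "c \<in> Hom C (shO C X) (shO C Y)"
  shows "\<exists>f\<in>Hom C X Y. c = shM C f"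
  using bij_betw_imp_surj_on[OF shift_bij_betw[OF assms(1-3)]] assms(4) by blast

lemma shift_faithful:
  assumes C: "triangulated C" and f: "f \<in> Hom C X Y" and g: "g \<in> Hom C X Y"
    and eq: "shM C f = shM C g"
  shows "f = g"
proof -
  have "X \<in> Ob C" "Y \<in> Ob C"
    using hom_dom_ob[OF _ f] hom_cod_ob[OF _ f] triangulated_category[OF C] by auto
  then show ?thesis
    using inj_onD[OF bij_betw_imp_inj_on[OF shift_bij_betw[OF C]] eq f g] by simp
qed

lemma shift_reflects_id:
  assumes C: "triangulated C" and f: "f \<in> Hom C X X" and "shM C f = idm C (shO C X)"
  shows "f = idm C X"
proof -
  have "X \<in> Ob C" using hom_dom_ob[OF triangulated_category[OF C] f] .
  then show ?thesis
    using shift_faithful[OF C f id_hom[OF triangulated_category[OF C]]] shift_id[OF C] assms(3)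
    by simp
qed

lemma shift_preserves_monomorphism:
  assumes C: "triangulated C" and u: "monomorphism C X Y u"
  shows "monomorphism C (shO C X) (shO C Y) (shM C u)"
proof -
  have cat: "category C" using triangulated_category[OF C] .
  have u_hom: "u \<in> Hom C X Y" using u unfolding monomorphism_def by blast
  have X: "X \<in> Ob C" using hom_dom_ob[OF cat u_hom] .
  have "a = b" if a: "a \<in> Hom C V (shO C X)" and b: "b \<in> Hom C V (shO C X)"
    and eq: "cmp C (shM C u) a = cmp C (shM C u) b" for V a b
  proof -
    \<comment> \<open>Precomposed with an isomorphism \<open>\<phi>\<close> from a shifted object, \<open>a\<close> and \<open>b\<close> become
      shifts of morphisms into \<open>X\<close>.\<close>
    obtain V' \<phi> where V': "V' \<in> Ob C" and \<phi>: "isomorphism C (shO C V') V \<phi>"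
      using shift_essentially_surjective[OF C hom_dom_ob[OF cat a]] by blast
    have \<phi>_hom: "\<phi> \<in> Hom C (shO C V') V" using \<phi> unfolding isomorphism_def by blast
    have \<phi>_epi: "epimorphism C (shO C V') V \<phi>"
      using split_epi_imp_epimorphism[OF cat] \<phi> unfolding isomorphism_def split_epi_def by blast
    obtain a' b' where a': "a' \<in> Hom C V' X" "cmp C a \<phi> = shM C a'"
      and b': "b' \<in> Hom C V' X" "cmp C b \<phi> = shM C b'"
      using shift_full[OF C V' X] cmp_hom[OF cat \<phi>_hom a] cmp_hom[OF cat \<phi>_hom b] by metis
    have "shM C (cmp C u a') = shM C (cmp C u b')"
      using shift_cmp[OF C a'(1) u_hom] shift_cmp[OF C b'(1) u_hom] a'(2) b'(2) eq
        cmp_assoc[OF cat \<phi>_hom a shift_hom[OF C u_hom]]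
        cmp_assoc[OF cat \<phi>_hom b shift_hom[OF C u_hom]] by simp
    then have "cmp C u a' = cmp C u b'"
      using shift_faithful[OF C cmp_hom[OF cat a'(1) u_hom] cmp_hom[OF cat b'(1) u_hom]] by blast
    then have "a' = b'" using u V' a'(1) b'(1) unfolding monomorphism_def by blast
    then have "cmp C a \<phi> = cmp C b \<phi>" using a'(2) b'(2) by simp
    then show "a = b" using \<phi>_epi a b hom_dom_ob[OF cat a] hom_cod_ob[OF cat a]
      unfolding epimorphism_def by blast
  qed
  then show ?thesis using shift_hom[OF C u_hom] unfolding monomorphism_def by blast
qed

lemma dist_triangle_homs:
  assumes "triangulated C" "(X,Y,Z,u,v,w) \<in> distT C"
  shows "u \<in> Hom C X Y" "v \<in> Hom C Y Z" "w \<in> Hom C Z (shO C X)"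
proof -
  have "distT C \<subseteq> {t. is_triangle C t}" using assms(1) unfolding triangulated_def by simp
  then have "is_triangle C (X,Y,Z,u,v,w)" using assms(2) by blast
  then show "u \<in> Hom C X Y" "v \<in> Hom C Y Z" "w \<in> Hom C Z (shO C X)"
    unfolding is_triangle_def by simp_all
qed

lemma dist_triangle_trivial:
  assumes C: "triangulated C" and X: "X \<in> Ob C"
  shows "\<exists>Z. (X, X, Z, idm C X, mzero C X Z, mzero C Z (shO C X)) \<in> distT C"
proof -
  have "\<exists>Z. is_zero_obj C Z" using C unfolding triangulated_def additive_def by simp
  then obtain Z where "is_zero_obj C Z" ..
  moreover have "\<forall>X\<in>Ob C. \<forall>Z. is_zero_obj C Z \<longrightarrow>
      (X, X, Z, idm C X, mzero C X Z, mzero C Z (shO C X)) \<in> distT C"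
    using C unfolding triangulated_def by simp
  ultimately show ?thesis using X by blast
qed

lemma dist_triangle_cone:
  assumes "triangulated C" "u \<in> Hom C X Y"
  shows "\<exists>Z v w. (X,Y,Z,u,v,w) \<in> distT C"
proof -
  have "\<forall>X Y u. u \<in> Hom C X Y \<longrightarrow> (\<exists>Z v w. (X,Y,Z,u,v,w) \<in> distT C)"
    using assms(1) unfolding triangulated_def by simp
  with assms(2) show ?thesis by blast
qed

lemma dist_triangle_rotate:
  assumes C: "triangulated C" and d: "(X,Y,Z,u,v,w) \<in> distT C"
  shows "(Y, Z, shO C X, v, w, mneg C (shM C u)) \<in> distT C"
proof -
  have "is_triangle C (X,Y,Z,u,v,w)"
    using dist_triangle_homs[OF C d] unfolding is_triangle_def by simp
  moreover have "\<forall>X Y Z u v w. is_triangle C (X,Y,Z,u,v,w) \<longrightarrow>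
      ((X,Y,Z,u,v,w) \<in> distT C \<longleftrightarrow> (Y, Z, shO C X, v, w, mneg C (shM C u)) \<in> distT C)"
    using C unfolding triangulated_def by simp
  ultimately show ?thesis using d by blast
qed

lemma dist_triangle_morphism:
  assumes "triangulated C" "(X,Y,Z,u,v,w) \<in> distT C" "(X',Y',Z',u',v',w') \<in> distT C"
    "a \<in> Hom C X X'" "b \<in> Hom C Y Y'" "cmp C b u = cmp C u' a"
  shows "\<exists>c. tri_morph C (X,Y,Z,u,v,w) (X',Y',Z',u',v',w') a b c"
proof -
  have "\<forall>X Y Z u v w X' Y' Z' u' v' w' a b.
        (X,Y,Z,u,v,w) \<in> distT C \<longrightarrow> (X',Y',Z',u',v',w') \<in> distT C \<longrightarrow>
        a \<in> Hom C X X' \<longrightarrow> b \<in> Hom C Y Y' \<longrightarrow> cmp C b u = cmp C u' a \<longrightarrow>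
        (\<exists>c. tri_morph C (X,Y,Z,u,v,w) (X',Y',Z',u',v',w') a b c)"
    using assms(1) unfolding triangulated_def by simp
  with assms(2-) show ?thesis by blast
qed

lemma dist_triangle_cmp_zero:
  assumes C: "triangulated C" and d: "(X,Y,Z,u,v,w) \<in> distT C"
  shows "cmp C v u = mzero C X Z"
proof -
  have cat: "category C" using triangulated_category[OF C] .
  have u: "u \<in> Hom C X Y" using dist_triangle_homs[OF C d] by blast
  have X: "X \<in> Ob C" using hom_dom_ob[OF cat u] .
  obtain Z0 where triv: "(X, X, Z0, idm C X, mzero C X Z0, mzero C Z0 (shO C X)) \<in> distT C"
    using dist_triangle_trivial[OF C X] by blast
  obtain c where "tri_morph C (X, X, Z0, idm C X, mzero C X Z0, mzero C Z0 (shO C X))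
      (X,Y,Z,u,v,w) (idm C X) u c"
    using dist_triangle_morphism[OF C triv d id_hom[OF cat X] u] by blast
  then have "c \<in> Hom C Z0 Z" "cmp C c (mzero C X Z0) = cmp C v u"
    unfolding tri_morph_def by auto
  then show ?thesis using cmp_zero[OF triangulated_preadditive[OF C] _ X] by metis
qed

lemma split_epi_of_dist_triangle:
  assumes C: "triangulated C" and d: "(X,Y,Z,u,v,w) \<in> distT C" and v: "v = mzero C Y Z"
  shows "split_epi C X Y u"
proof -
  have cat: "category C" and pa: "preadditive C"
    using triangulated_category[OF C] triangulated_preadditive[OF C] .
  have u: "u \<in> Hom C X Y" and v_hom: "v \<in> Hom C Y Z" using dist_triangle_homs[OF C d] by auto
  have X: "X \<in> Ob C" and Y: "Y \<in> Ob C" and Z: "Z \<in> Ob C"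
    using hom_dom_ob[OF cat u] hom_dom_ob[OF cat v_hom] hom_cod_ob[OF cat v_hom] .
  obtain Z0 where triv: "(Y, Y, Z0, idm C Y, mzero C Y Z0, mzero C Z0 (shO C Y)) \<in> distT C"
    using dist_triangle_trivial[OF C Y] by blast
  have Z0: "Z0 \<in> Ob C" using hom_cod_ob[OF cat dist_triangle_homs(2)[OF C triv]] .
  \<comment> \<open>Map the rotated trivial triangle of \<open>Y\<close> into the rotated triangle; the third square
    then says that \<open>shM C u\<close> has a right inverse.\<close>
  have "cmp C (mzero C Z0 Z) (mzero C Y Z0) = cmp C v (idm C Y)"
    using zero_cmp[OF pa zero_hom[OF pa Y Z0] Z] cmp_id_right[OF cat v_hom] v by simp
  then obtain c where "tri_morph C
      (Y, Z0, shO C Y, mzero C Y Z0, mzero C Z0 (shO C Y), mneg C (shM C (idm C Y)))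
      (Y, Z, shO C X, v, w, mneg C (shM C u)) (idm C Y) (mzero C Z0 Z) c"
    using dist_triangle_morphism[OF C dist_triangle_rotate[OF C triv] dist_triangle_rotate[OF C d]
        id_hom[OF cat Y] zero_hom[OF pa Z0 Z]] by blast
  then have c: "c \<in> Hom C (shO C Y) (shO C X)"
    and square: "cmp C (shM C (idm C Y)) (mneg C (shM C (idm C Y))) = cmp C (mneg C (shM C u)) c"
    unfolding tri_morph_def by auto
  have "mneg C (idm C (shO C Y)) = mneg C (cmp C (shM C u) c)"
    using square shift_id[OF C Y] cmp_id_left[OF cat neg_hom[OF pa id_hom[OF cat shift_ob[OF C Y]]]]
      neg_cmp[OF pa c shift_hom[OF C u]] by simp
  then have right_inverse: "cmp C (shM C u) c = idm C (shO C Y)"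
    using neg_inject[OF pa id_hom[OF cat shift_ob[OF C Y]] cmp_hom[OF cat c shift_hom[OF C u]]]
    by simp
  obtain s where s: "s \<in> Hom C Y X" and c_eq: "c = shM C s" using shift_full[OF C Y X c] by blast
  have "cmp C u s = idm C Y"
    using shift_reflects_id[OF C cmp_hom[OF cat s u]] shift_cmp[OF C s u] c_eq right_inverse by simp
  then show ?thesis using u s unfolding split_epi_def by blast
qed

lemma split_mono_of_dist_triangle:
  assumes C: "triangulated C" and d: "(X,Y,Z,u,v,w) \<in> distT C" and w: "w = mzero C Z (shO C X)"
  shows "split_mono C X Y u"
proof -
  have cat: "category C" and pa: "preadditive C"
    using triangulated_category[OF C] triangulated_preadditive[OF C] .
  have u: "u \<in> Hom C X Y" and v_hom: "v \<in> Hom C Y Z" using dist_triangle_homs[OF C d] by auto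
  have X: "X \<in> Ob C" and Y: "Y \<in> Ob C" and Z: "Z \<in> Ob C"
    using hom_dom_ob[OF cat u] hom_dom_ob[OF cat v_hom] hom_cod_ob[OF cat v_hom] .
  have \<Sigma>X: "shO C X \<in> Ob C" using shift_ob[OF C X] .
  obtain Z0 where triv: "(X, X, Z0, idm C X, mzero C X Z0, mzero C Z0 (shO C X)) \<in> distT C"
    using dist_triangle_trivial[OF C X] by blast
  have Z0: "Z0 \<in> Ob C" using hom_cod_ob[OF cat dist_triangle_homs(2)[OF C triv]] .
  \<comment> \<open>Map the twice rotated triangle into the twice rotated trivial triangle of \<open>X\<close>; the
    second square then says that \<open>shM C u\<close> has a left inverse.\<close>
  have "cmp C (idm C (shO C X)) w = cmp C (mzero C Z0 (shO C X)) (mzero C Z Z0)"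
    using zero_cmp[OF pa zero_hom[OF pa Z Z0] \<Sigma>X] cmp_id_left[OF cat zero_hom[OF pa Z \<Sigma>X]] w
    by simp
  then obtain c where "tri_morph C
      (Z, shO C X, shO C Y, w, mneg C (shM C u), mneg C (shM C v))
      (Z0, shO C X, shO C X, mzero C Z0 (shO C X), mneg C (shM C (idm C X)),
        mneg C (shM C (mzero C X Z0)))
      (mzero C Z Z0) (idm C (shO C X)) c"
    using dist_triangle_morphism[OF C
        dist_triangle_rotate[OF C dist_triangle_rotate[OF C d]]
        dist_triangle_rotate[OF C dist_triangle_rotate[OF C triv]]
        zero_hom[OF pa Z Z0] id_hom[OF cat \<Sigma>X]] by blast
  then have c: "c \<in> Hom C (shO C Y) (shO C X)"
    and square: "cmp C c (mneg C (shM C u)) = cmp C (mneg C (shM C (idm C X))) (idm C (shO C X))"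
    unfolding tri_morph_def by auto
  have "mneg C (cmp C c (shM C u)) = mneg C (idm C (shO C X))"
    using square shift_id[OF C X] cmp_id_right[OF cat neg_hom[OF pa id_hom[OF cat \<Sigma>X]]]
      cmp_neg[OF pa shift_hom[OF C u] c] by simp
  then have left_inverse: "cmp C c (shM C u) = idm C (shO C X)"
    using neg_inject[OF pa cmp_hom[OF cat shift_hom[OF C u] c] id_hom[OF cat \<Sigma>X]] by simp
  obtain r where r: "r \<in> Hom C Y X" and c_eq: "c = shM C r" using shift_full[OF C Y X c] by blast
  have "cmp C r u = idm C X"
    using shift_reflects_id[OF C cmp_hom[OF cat u r]] shift_cmp[OF C u r] c_eq left_inverse by simp
  then show ?thesis using u r unfolding split_mono_def by blast
qed

lemma epimorphism_imp_split_epi: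
  assumes C: "triangulated C" and u: "epimorphism C X Y u"
  shows "split_epi C X Y u"
proof -
  have cat: "category C" and pa: "preadditive C"
    using triangulated_category[OF C] triangulated_preadditive[OF C] .
  have u_hom: "u \<in> Hom C X Y" using u unfolding epimorphism_def by blast
  obtain Z v w where d: "(X,Y,Z,u,v,w) \<in> distT C" using dist_triangle_cone[OF C u_hom] by blast
  have v: "v \<in> Hom C Y Z" using dist_triangle_homs[OF C d] by blast
  have Y: "Y \<in> Ob C" and Z: "Z \<in> Ob C" using hom_dom_ob[OF cat v] hom_cod_ob[OF cat v] .
  have "cmp C v u = cmp C (mzero C Y Z) u"
    using dist_triangle_cmp_zero[OF C d] zero_cmp[OF pa u_hom Z] by simp
  then have "v = mzero C Y Z" using u v zero_hom[OF pa Y Z] Z unfolding epimorphism_def by blast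
  then show ?thesis using split_epi_of_dist_triangle[OF C d] by blast
qed

lemma monomorphism_imp_split_mono:
  assumes C: "triangulated C" and u: "monomorphism C X Y u"
  shows "split_mono C X Y u"
proof -
  have cat: "category C" and pa: "preadditive C"
    using triangulated_category[OF C] triangulated_preadditive[OF C] .
  have u_hom: "u \<in> Hom C X Y" using u unfolding monomorphism_def by blast
  obtain Z v w where d: "(X,Y,Z,u,v,w) \<in> distT C" using dist_triangle_cone[OF C u_hom] by blast
  have w: "w \<in> Hom C Z (shO C X)" using dist_triangle_homs[OF C d] by blast
  have Z: "Z \<in> Ob C" and \<Sigma>X: "shO C X \<in> Ob C" using hom_dom_ob[OF cat w] hom_cod_ob[OF cat w] .
  have \<Sigma>Y: "shO C Y \<in> Ob C" using shift_ob[OF C hom_cod_ob[OF cat u_hom]] .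
  have \<Sigma>u: "shM C u \<in> Hom C (shO C X) (shO C Y)" using shift_hom[OF C u_hom] .
  have "mneg C (cmp C (shM C u) w) = mneg C (mzero C Z (shO C Y))"
    using dist_triangle_cmp_zero[OF C dist_triangle_rotate[OF C dist_triangle_rotate[OF C d]]]
      neg_cmp[OF pa w \<Sigma>u] neg_zero[OF pa Z \<Sigma>Y] by simp
  then have "cmp C (shM C u) w = cmp C (shM C u) (mzero C Z (shO C X))"
    using neg_inject[OF pa cmp_hom[OF cat w \<Sigma>u] zero_hom[OF pa Z \<Sigma>Y]] cmp_zero[OF pa \<Sigma>u Z]
    by simp
  then have "w = mzero C Z (shO C X)"
    using shift_preserves_monomorphism[OF C u] w zero_hom[OF pa Z \<Sigma>X] Z
    unfolding monomorphism_def by blast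
  then show ?thesis using split_mono_of_dist_triangle[OF C d] by blast
qed

lemma split_epi_iff_epimorphism:
  "triangulated C \<Longrightarrow> split_epi C X Y u \<longleftrightarrow> epimorphism C X Y u"
  using epimorphism_imp_split_epi split_epi_imp_epimorphism[OF triangulated_category] by metis

lemma split_mono_iff_monomorphism:
  "triangulated C \<Longrightarrow> split_mono C X Y u \<longleftrightarrow> monomorphism C X Y u"
  using monomorphism_imp_split_mono split_mono_imp_monomorphism[OF triangulated_category] by metis

section \<open>Adjunctions\<close>

lemma rel_projective_iff_counit_epimorphism:
  assumes C: "category C" and adj: "adjunction C D Fo Fm Go Gm unit counit" and Y: "Y \<in> Ob D"
  shows "rel_projective D Gm Y \<longleftrightarrow> epimorphism D (Fo (Go Y)) Y (counit Y)"
proof -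
  have G: "is_functor D C Go Gm"
    and counit_nat: "\<And>X Z f. f \<in> Hom D X Z \<Longrightarrow>
      cmp D (counit Z) (Fm (Gm f)) = cmp D f (counit X)"
    and counit_Y: "counit Y \<in> Hom D (Fo (Go Y)) Y"
    and unit_GY: "unit (Go Y) \<in> Hom C (Go Y) (Go (Fo (Go Y)))"
    and triangle: "cmp C (Gm (counit Y)) (unit (Go Y)) = idm C (Go Y)"
    using adj Y unfolding adjunction_def nat_trans_def is_functor_def by auto
  have Gm_hom: "\<And>X Z f. f \<in> Hom D X Z \<Longrightarrow> Gm f \<in> Hom C (Go X) (Go Z)"
    and Gm_cmp: "\<And>X Z W f g. f \<in> Hom D X Z \<Longrightarrow> g \<in> Hom D Z W \<Longrightarrow>
      Gm (cmp D g f) = cmp C (Gm g) (Gm f)"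
    using G unfolding is_functor_def by auto
  have Gm_via_counit: "Gm f = cmp C (Gm (cmp D f (counit Y))) (unit (Go Y))"
    if f: "f \<in> Hom D Y Z" for f Z
    using cmp_assoc[OF C unit_GY Gm_hom[OF counit_Y] Gm_hom[OF f]] triangle
      cmp_id_right[OF C Gm_hom[OF f]] Gm_cmp[OF counit_Y f] by simp
  show ?thesis
  proof
    assume "rel_projective D Gm Y"
    then show "epimorphism D (Fo (Go Y)) Y (counit Y)"
      using counit_Y Gm_via_counit unfolding rel_projective_def epimorphism_def inj_on_def
      by metis
  next
    assume "epimorphism D (Fo (Go Y)) Y (counit Y)"
    then show "rel_projective D Gm Y"
      using counit_nat unfolding rel_projective_def epimorphism_def inj_on_def by metis
  qed
qed

lemma rel_injective_iff_unit_monomorphism: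
  assumes D: "category D" and adj: "adjunction C D Fo Fm Go Gm unit counit" and X: "X \<in> Ob C"
  shows "rel_injective C Fm X \<longleftrightarrow> monomorphism C X (Go (Fo X)) (unit X)"
proof -
  have F: "is_functor C D Fo Fm"
    and unit_nat: "\<And>V Z f. f \<in> Hom C V Z \<Longrightarrow>
      cmp C (unit Z) f = cmp C (Gm (Fm f)) (unit V)"
    and unit_X: "unit X \<in> Hom C X (Go (Fo X))"
    and counit_FX: "counit (Fo X) \<in> Hom D (Fo (Go (Fo X))) (Fo X)"
    and triangle: "cmp D (counit (Fo X)) (Fm (unit X)) = idm D (Fo X)"
    using adj X unfolding adjunction_def nat_trans_def is_functor_def by auto
  have Fm_hom: "\<And>V Z f. f \<in> Hom C V Z \<Longrightarrow> Fm f \<in> Hom D (Fo V) (Fo Z)"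
    and Fm_cmp: "\<And>V Z W f g. f \<in> Hom C V Z \<Longrightarrow> g \<in> Hom C Z W \<Longrightarrow>
      Fm (cmp C g f) = cmp D (Fm g) (Fm f)"
    using F unfolding is_functor_def by auto
  have Fm_via_unit: "Fm f = cmp D (counit (Fo X)) (Fm (cmp C (unit X) f))"
    if f: "f \<in> Hom C V X" for f V
    using cmp_assoc[OF D Fm_hom[OF f] Fm_hom[OF unit_X] counit_FX] triangle
      cmp_id_left[OF D Fm_hom[OF f]] Fm_cmp[OF f unit_X] by simp
  show ?thesis
  proof
    assume "rel_injective C Fm X"
    then show "monomorphism C X (Go (Fo X)) (unit X)"
      using unit_X Fm_via_unit unfolding rel_injective_def monomorphism_def inj_on_def
      by metis
  next
    assume "monomorphism C X (Go (Fo X)) (unit X)"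
    then show "rel_injective C Fm X"
      using unit_nat unfolding rel_injective_def monomorphism_def inj_on_def by metis
  qed
qed

theorem corollary2p9:
  fixes SS :: "('a,'b) tricat" and TT :: "('c,'d) tricat"
    and To :: "'a \<Rightarrow> 'c" and Tm :: "'b \<Rightarrow> 'd"
  assumes "triangulated SS" and "triangulated TT"
    and "\<exists>\<phi>. triangle_functor SS TT To Tm \<phi>"
  shows "(\<forall>(So :: 'c \<Rightarrow> 'a) (Sm :: 'd \<Rightarrow> 'b) (\<eta> :: 'a \<Rightarrow> 'b).
            (\<exists>\<epsilon>. adjunction TT SS So Sm To Tm \<epsilon> \<eta>) \<longrightarrow>
            (\<forall>Q\<in>Ob SS. rel_projective SS Tm Q \<longleftrightarrow> split_epi SS (So (To Q)) Q (\<eta> Q)))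
       \<and> (\<forall>(So :: 'c \<Rightarrow> 'a) (Sm :: 'd \<Rightarrow> 'b) (\<epsilon>' :: 'a \<Rightarrow> 'b).
            (\<exists>\<zeta>. adjunction SS TT To Tm So Sm \<epsilon>' \<zeta>) \<longrightarrow>
            (\<forall>Q\<in>Ob SS. rel_injective SS Tm Q \<longleftrightarrow> split_mono SS Q (So (To Q)) (\<epsilon>' Q)))"
proof -
  have SS: "triangulated SS" and TT: "category TT"
    using assms(1) triangulated_category[OF assms(2)] .
  have "rel_projective SS Tm Q \<longleftrightarrow> split_epi SS (So (To Q)) Q (\<eta> Q)"
    if "adjunction TT SS So Sm To Tm \<epsilon> \<eta>" and "Q \<in> Ob SS" for So Sm \<epsilon> \<eta> Q
    using rel_projective_iff_counit_epimorphism[OF TT that] split_epi_iff_epimorphism[OF SS]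
    by simp
  moreover have "rel_injective SS Tm Q \<longleftrightarrow> split_mono SS Q (So (To Q)) (\<epsilon>' Q)"
    if "adjunction SS TT To Tm So Sm \<epsilon>' \<zeta>" and "Q \<in> Ob SS" for So Sm \<epsilon>' \<zeta> Q
    using rel_injective_iff_unit_monomorphism[OF TT that] split_mono_iff_monomorphism[OF SS]
    by simp
  ultimately show ?thesis by blast
qed

end
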